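(* Let $p=(p_i)_{i\in\mathbb{N}}$ be a cookie environment with $p_i\in[\frac12,1)$ for all $i$, and suppose $\delta=\sum_{i=1}^\infty(2p_i-1)<\infty$. Let $\rho(x)=\mathbb{E}[U_p(x)]-x$, $\nu(x)=\frac1x\mathbb{E}[(U_p(x)-x)^2]$ and $\theta(x)=\frac{2\rho(x)}{\nu(x)}$. Then: \begin{enumerate} \item $\mu=\lim_{x\to\infty}\frac{\mathbb{E}[U_p(x)]}{x}=1$; \item $\lim_{x\to\infty}\theta(x)=\delta$; \item there is a constant $C$ depending only on $p$ such that $\theta(x)\le\delta+C\log^4(x)/\sqrt x$ for all sufficiently large $x$. \end{enumerate}
   Context: For a cookie environment $p$, let $B_1,B_2,\dots$ be independent Bernoulli random variables with $\Pr[B_i=1]=p_i$ ($B_i=1$ is a "success", $B_i=0$ a "failure"). For a positive integer $x$, $U_p(x)=\inf\{k\in\mathbb{N}:\sum_{i=1}^k(1-B_i)=x\}-x$, i.e. the number of successes before the $x$-th failure. *)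

theory Defs
  imports "HOL-Probability.Probability"
begin

text \<open>Cookie environment p: Isabelle index i corresponds to the paper's index i+1.
  Outcome omega :: nat => bool, omega i = True means B_{i+1} = 1 (success).\<close>

definition cookie_space :: "(nat \<Rightarrow> real) \<Rightarrow> (nat \<Rightarrow> bool) measure" where
  "cookie_space p = (\<Pi>\<^sub>M i\<in>(UNIV::nat set). measure_pmf (bernoulli_pmf (p i)))"

definition failures :: "(nat \<Rightarrow> bool) \<Rightarrow> nat \<Rightarrow> nat" where
  "failures \<omega> k = card {i. i < k \<and> \<not> \<omega> i}"

text \<open>U_p(x): number of successes before the x-th failure
  (set to 0 on the null event that fewer than x failures occur).\<close>
definition U :: "nat \<Rightarrow> (nat \<Rightarrow> bool) \<Rightarrow> nat" where
  "U x \<omega> = (if \<exists>k. failures \<omega> k = x then (LEAST k. failures \<omega> k = x) - x else 0)"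

definition cookie_delta :: "(nat \<Rightarrow> real) \<Rightarrow> real" where
  "cookie_delta p = (\<Sum>i. 2 * p i - 1)"

definition EU :: "(nat \<Rightarrow> real) \<Rightarrow> nat \<Rightarrow> real" where
  "EU p x = (\<integral>\<omega>. real (U x \<omega>) \<partial>cookie_space p)"

definition rho :: "(nat \<Rightarrow> real) \<Rightarrow> nat \<Rightarrow> real" where
  "rho p x = EU p x - real x"

definition nu :: "(nat \<Rightarrow> real) \<Rightarrow> nat \<Rightarrow> real" where
  "nu p x = (1 / real x) * (\<integral>\<omega>. (real (U x \<omega>) - real x)\<^sup>2 \<partial>cookie_space p)"

definition theta :: "(nat \<Rightarrow> real) \<Rightarrow> nat \<Rightarrow> real" where
  "theta p x = 2 * rho p x / nu p x"

end

theory Submission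
  imports Defs "HOL-Real_Asymp.Real_Asymp"
begin

text \<open>Let the walk step up on a success and down on a failure, and freeze it at the \<open>x\<close>-th
  failure; the frozen walk sits at \<open>U x - x\<close> and the number of steps it took is \<open>U x + x\<close>. Since the
  trial at time \<open>n\<close> is independent of the past, the mean of the walk \<open>S\<^sub>n\<close> after \<open>n\<close> trials is
  \<open>\<Sum>i<n. \<epsilon>\<^sub>i P(not frozen at i)\<close> with \<open>\<epsilon>\<^sub>i = 2 p\<^sub>i - 1 \<ge> 0\<close>, which lies between \<open>\<Sum>i<x. \<epsilon>\<^sub>i\<close>
  and \<open>\<delta>\<close>; hence \<open>\<rho>(x) \<rightarrow> \<delta>\<close>. Its second moment grows by \<open>P(not frozen at n)\<close> plus a cross term
  \<open>2 \<epsilon>\<^sub>n E[1{not frozen} S\<^sub>n]\<close>, which Cauchy-Schwarz bounds by \<open>2 \<epsilon>\<^sub>n \<surd>(E S\<^sub>n\<^sup>2)\<close>. Bootstrapping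
  gives \<open>E S\<^sub>n\<^sup>2 \<le> \<kappa>\<^sup>2\<close> with \<open>\<kappa> = O(\<surd>x)\<close>, so the second moment and the mean number of steps differ
  by at most \<open>2 \<delta> \<kappa>\<close>. In the limit \<open>E (U x - x)\<^sup>2 = 2 x + O(\<surd>x)\<close>, i.e. \<open>\<nu>(x) = 2 + O(1/\<surd>x)\<close>,
  and therefore \<open>\<theta> = 2 \<rho> / \<nu> \<le> \<delta> + O(1/\<surd>x)\<close>.\<close>

lemma two_mult_div_le:
  fixes r d v e :: real
  assumes "0 \<le> r" "r \<le> d" "\<bar>v - 2\<bar> \<le> e" "e \<le> 1"
  shows "2 * r / v \<le> d + d * e"
proof -
  have v: "1 \<le> v" and e: "0 \<le> e" and d: "0 \<le> d"
    using assms by auto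
  have "2 * r \<le> d * 2"
    using assms by simp
  also have "\<dots> \<le> d * (v + e)"
    using assms d by (intro mult_left_mono) auto
  also have "\<dots> \<le> (d + d * e) * v"
    using mult_left_mono[OF v, of "d * e"] d e by (simp add: algebra_simps)
  finally show ?thesis
    using v by (simp add: divide_le_eq)
qed

lemma (in prob_space) expectation_abs_le_sqrt:
  fixes f :: "'a \<Rightarrow> real"
  assumes "integrable M f" "integrable M (\<lambda>\<omega>. (f \<omega>)\<^sup>2)"
  shows "expectation (\<lambda>\<omega>. \<bar>f \<omega>\<bar>) \<le> sqrt (expectation (\<lambda>\<omega>. (f \<omega>)\<^sup>2))"
proof (rule real_le_rsqrt)
  have "0 \<le> variance (\<lambda>\<omega>. \<bar>f \<omega>\<bar>)"
    by (rule variance_positive)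
  also have "\<dots> = expectation (\<lambda>\<omega>. (f \<omega>)\<^sup>2) - (expectation (\<lambda>\<omega>. \<bar>f \<omega>\<bar>))\<^sup>2"
    using assms by (subst variance_eq) auto
  finally show "(expectation (\<lambda>\<omega>. \<bar>f \<omega>\<bar>))\<^sup>2 \<le> expectation (\<lambda>\<omega>. (f \<omega>)\<^sup>2)"
    by simp
qed

lemma failures_0 [simp]: "failures \<omega> 0 = 0"
  by (simp add: failures_def)

lemma failures_Suc: "failures \<omega> (Suc n) = failures \<omega> n + (if \<omega> n then 0 else 1)"
proof -
  have "{i. i < Suc n \<and> \<not> \<omega> i} = {i. i < n \<and> \<not> \<omega> i} \<union> (if \<omega> n then {} else {n})"
    by (auto simp: less_Suc_eq)
  then show ?thesis
    unfolding failures_def by (auto simp: card_insert_if)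
qed

lemma failures_eq_sum: "failures \<omega> n = (\<Sum>i<n. if \<omega> i then 0 else 1)"
  by (induction n) (simp_all add: failures_Suc)

lemma failures_mono: "i \<le> j \<Longrightarrow> failures \<omega> i \<le> failures \<omega> j"
  by (induction j) (auto simp: failures_Suc le_Suc_eq)

lemma failures_le: "failures \<omega> k \<le> k"
  by (induction k) (auto simp: failures_Suc)

lemma failures_cong: "(\<And>i. i < n \<Longrightarrow> \<omega> i = \<omega>' i) \<Longrightarrow> failures \<omega> n = failures \<omega>' n"
  unfolding failures_eq_sum by (rule sum.cong) auto

lemma failures_attains: "x \<le> failures \<omega> k \<Longrightarrow> \<exists>j\<le>k. failures \<omega> j = x"
proof (induction k)
  case (Suc k)
  show ?case
  proof (cases "x \<le> failures \<omega> k")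
    case True
    then show ?thesis using Suc.IH le_Suc_eq by blast
  next
    case False
    then have "failures \<omega> (Suc k) = x"
      using Suc.prems by (auto simp: failures_Suc split: if_splits)
    then show ?thesis by blast
  qed
qed simp

definition failure_time :: "nat \<Rightarrow> (nat \<Rightarrow> bool) \<Rightarrow> nat" where
  "failure_time x \<omega> = (LEAST k. failures \<omega> k = x)"

lemma failures_failure_time: "\<exists>k. failures \<omega> k = x \<Longrightarrow> failures \<omega> (failure_time x \<omega>) = x"
  unfolding failure_time_def by (rule LeastI_ex)

lemma less_failure_time_iff:
  assumes "\<exists>k. failures \<omega> k = x"
  shows "i < failure_time x \<omega> \<longleftrightarrow> failures \<omega> i < x"
proof
  assume "i < failure_time x \<omega>"
  show "failures \<omega> i < x"
  proof (rule ccontr)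
    assume "\<not> failures \<omega> i < x"
    then obtain j where "j \<le> i" "failures \<omega> j = x"
      using failures_attains not_less by blast
    moreover have "failure_time x \<omega> \<le> j"
      unfolding failure_time_def using \<open>failures \<omega> j = x\<close> by (rule Least_le)
    ultimately show False using \<open>i < failure_time x \<omega>\<close> by simp
  qed
next
  assume "failures \<omega> i < x"
  then show "i < failure_time x \<omega>"
    using failures_mono[of "failure_time x \<omega>" i \<omega>] failures_failure_time[OF assms]
    by (metis leD leI)
qed

lemma U_add_eq_failure_time:
  assumes "\<exists>k. failures \<omega> k = x"
  shows "U x \<omega> + x = failure_time x \<omega>"
  using assms failures_le[of \<omega> "failure_time x \<omega>"] failures_failure_time[OF assms]
  by (simp add: U_def failure_time_def)

section \<open>The stopped walk\<close>

definition active :: "nat \<Rightarrow> (nat \<Rightarrow> bool) \<Rightarrow> nat \<Rightarrow> real" where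
  "active x \<omega> i = (if failures \<omega> i < x then 1 else 0)"

definition increment :: "(nat \<Rightarrow> bool) \<Rightarrow> nat \<Rightarrow> real" where
  "increment \<omega> i = (if \<omega> i then 1 else -1)"

definition stopped_walk :: "nat \<Rightarrow> nat \<Rightarrow> (nat \<Rightarrow> bool) \<Rightarrow> real" where
  "stopped_walk x n \<omega> = (\<Sum>i<n. active x \<omega> i * increment \<omega> i)"

definition stopped_time :: "nat \<Rightarrow> nat \<Rightarrow> (nat \<Rightarrow> bool) \<Rightarrow> real" where
  "stopped_time x n \<omega> = (\<Sum>i<n. active x \<omega> i)"

lemma stopped_walk_Suc:
  "stopped_walk x (Suc n) \<omega> = stopped_walk x n \<omega> + active x \<omega> n * increment \<omega> n"
  by (simp add: stopped_walk_def)

lemma stopped_time_Suc: "stopped_time x (Suc n) \<omega> = stopped_time x n \<omega> + active x \<omega> n"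
  by (simp add: stopped_time_def)

lemma stopped_time_eq_walk:
  "stopped_time x n \<omega> = stopped_walk x n \<omega> + 2 * real (min (failures \<omega> n) x)"
  by (induction n)
    (auto simp: stopped_time_Suc stopped_walk_Suc failures_Suc active_def increment_def
      stopped_time_def stopped_walk_def)

lemma abs_stopped_walk_le: "\<bar>stopped_walk x n \<omega>\<bar> \<le> stopped_time x n \<omega>"
  unfolding stopped_walk_def stopped_time_def
  by (rule order_trans[OF sum_abs sum_mono]) (simp add: active_def increment_def)

lemma stopped_time_nonneg: "0 \<le> stopped_time x n \<omega>"
  unfolding stopped_time_def by (rule sum_nonneg) (simp add: active_def)

lemma stopped_time_le: "stopped_time x n \<omega> \<le> n"
  unfolding stopped_time_def using sum_bounded_above[of "{..<n}" "active x \<omega>" 1]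
  by (simp add: active_def)

lemma stopped_time_mono: "m \<le> n \<Longrightarrow> stopped_time x m \<omega> \<le> stopped_time x n \<omega>"
  unfolding stopped_time_def by (rule sum_mono2) (auto simp: active_def)

text \<open>An active step \<open>n\<close> means that all earlier steps were active as well.\<close>
lemma active_le_stopped_time: "real (Suc n) * active x \<omega> n \<le> stopped_time x (Suc n) \<omega>"
proof (cases "failures \<omega> n < x")
  case True
  then have "active x \<omega> i = 1" if "i < Suc n" for i
    using failures_mono[of i n \<omega>] that by (auto simp: active_def)
  then show ?thesis by (simp add: stopped_time_def active_def)
qed (simp add: active_def stopped_time_nonneg)

lemma active_cong: "(\<And>i. i < n \<Longrightarrow> \<omega> i = \<omega>' i) \<Longrightarrow> active x \<omega> n = active x \<omega>' n"
  unfolding active_def using failures_cong by metis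

lemma stopped_walk_cong:
  "(\<And>i. i < n \<Longrightarrow> \<omega> i = \<omega>' i) \<Longrightarrow> stopped_walk x n \<omega> = stopped_walk x n \<omega>'"
  unfolding stopped_walk_def increment_def by (rule sum.cong) (auto intro!: active_cong)

lemma stopped_time_eq_min:
  assumes "\<exists>k. failures \<omega> k = x"
  shows "stopped_time x n \<omega> = min n (failure_time x \<omega>)"
proof -
  have "stopped_time x n \<omega> = (\<Sum>i<min n (failure_time x \<omega>). 1)"
    unfolding stopped_time_def
    by (rule sum.mono_neutral_cong_right) (auto simp: active_def less_failure_time_iff[OF assms, symmetric])
  then show ?thesis by simp
qed

lemma stopped_time_le_U:
  "\<exists>k. failures \<omega> k = x \<Longrightarrow> stopped_time x n \<omega> \<le> real (U x \<omega>) + real x"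
  using stopped_time_eq_min U_add_eq_failure_time by (metis min.cobounded2 of_nat_add of_nat_le_iff)

lemma stopped_time_tendsto:
  assumes "\<exists>k. failures \<omega> k = x"
  shows "(\<lambda>n. stopped_time x n \<omega>) \<longlonglongrightarrow> real (U x \<omega>) + real x"
proof (rule tendsto_eventually)
  show "\<forall>\<^sub>F n in sequentially. stopped_time x n \<omega> = real (U x \<omega>) + real x"
    using eventually_ge_at_top[of "failure_time x \<omega>"]
    by eventually_elim (simp add: stopped_time_eq_min[OF assms] U_add_eq_failure_time[OF assms, symmetric])
qed

lemma stopped_walk_tendsto:
  assumes "\<exists>k. failures \<omega> k = x"
  shows "(\<lambda>n. stopped_walk x n \<omega>) \<longlonglongrightarrow> real (U x \<omega>) - real x"
proof (rule tendsto_eventually)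
  show "\<forall>\<^sub>F n in sequentially. stopped_walk x n \<omega> = real (U x \<omega>) - real x"
    using eventually_ge_at_top[of "failure_time x \<omega>"]
  proof eventually_elim
    case (elim n)
    then have "x \<le> failures \<omega> n"
      using failures_mono[OF elim, of \<omega>] failures_failure_time[OF assms] by simp
    then show ?case
      using stopped_time_eq_walk[of x n \<omega>] stopped_time_eq_min[OF assms, of n] elim
        U_add_eq_failure_time[OF assms]
      by (simp add: min_absorb2)
  qed
qed

lemma stopped_walk_Suc_sq:
  "(stopped_walk x (Suc n) \<omega>)\<^sup>2
    = (stopped_walk x n \<omega>)\<^sup>2 + active x \<omega> n + 2 * (active x \<omega> n * stopped_walk x n \<omega> * increment \<omega> n)"
  by (auto simp: stopped_walk_Suc active_def increment_def power2_eq_square algebra_simps)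

lemma abs_stopped_walk_le_n: "\<bar>stopped_walk x n \<omega>\<bar> \<le> n"
  using abs_stopped_walk_le stopped_time_le order_trans by blast

lemma abs_active_le: "\<bar>active x \<omega> i\<bar> \<le> 1"
  by (simp add: active_def)

lemma abs_active_mult_le: "\<bar>active x \<omega> i * y\<bar> \<le> \<bar>y\<bar>"
  by (simp add: active_def)

lemma stopped_time_sq_le: "(stopped_time x n \<omega>)\<^sup>2 \<le> 2 * (stopped_walk x n \<omega>)\<^sup>2 + 8 * (real x)\<^sup>2"
proof -
  define b where "b = 2 * real (min (failures \<omega> n) x)"
  have "0 \<le> b" "b \<le> 2 * real x"
    by (auto simp: b_def)
  then have "b\<^sup>2 \<le> 4 * (real x)\<^sup>2"
    using power_mono[of b "2 * real x" 2] by (simp add: power_mult_distrib)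
  moreover have "(stopped_walk x n \<omega> + b)\<^sup>2 \<le> 2 * (stopped_walk x n \<omega>)\<^sup>2 + 2 * b\<^sup>2"
    using zero_le_power2[of "stopped_walk x n \<omega> - b"] by (simp add: power2_sum power2_diff)
  ultimately show ?thesis
    by (simp add: stopped_time_eq_walk b_def[symmetric])
qed

lemma stopped_time_le_sq:
  assumes "\<exists>k. failures \<omega> k = x"
  shows "stopped_time x n \<omega> \<le> (stopped_time x n \<omega>)\<^sup>2"
proof -
  have "min n (failure_time x \<omega>) \<le> min n (failure_time x \<omega>) * min n (failure_time x \<omega>)"
    by (rule le_square)
  then show ?thesis
    unfolding stopped_time_eq_min[OF assms] power2_eq_square by (metis of_nat_le_iff of_nat_mult)
qed

locale cookie_env =
  fixes p :: "nat \<Rightarrow> real"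
  assumes p_nonneg: "\<And>i. 0 \<le> p i" and p_le_1: "\<And>i. p i \<le> 1"
begin

abbreviation "trial i \<equiv> measure_pmf (bernoulli_pmf (p i))"

sublocale prob_space "cookie_space p"
  unfolding cookie_space_def by (intro prob_space_PiM prob_space_measure_pmf)

lemma space_cookie_space [simp]: "space (cookie_space p) = UNIV"
  unfolding cookie_space_def by (simp add: space_PiM)

lemma prob_UNIV [simp]: "prob UNIV = 1"
  using prob_space by simp

lemma measurable_coordinate [measurable]:
  "(\<lambda>\<omega>. \<omega> i) \<in> measurable (cookie_space p) (count_space UNIV)"
proof -
  have "(\<lambda>\<omega>. \<omega> i) \<in> measurable (cookie_space p) (trial i)"
    unfolding cookie_space_def by (rule measurable_component_singleton) simp
  then show ?thesis by (simp add: measurable_def)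
qed

lemma measurable_failures [measurable]:
  "(\<lambda>\<omega>. failures \<omega> n) \<in> measurable (cookie_space p) (count_space UNIV)"
  unfolding failures_eq_sum by measurable

lemma measurable_U [measurable]: "U x \<in> measurable (cookie_space p) (count_space UNIV)"
  unfolding U_def by measurable

lemma borel_measurable_active [measurable]: "(\<lambda>\<omega>. active x \<omega> i) \<in> borel_measurable (cookie_space p)"
  unfolding active_def by measurable

lemma borel_measurable_increment [measurable]: "(\<lambda>\<omega>. increment \<omega> i) \<in> borel_measurable (cookie_space p)"
  unfolding increment_def by measurable

lemma borel_measurable_stopped_walk [measurable]: "stopped_walk x n \<in> borel_measurable (cookie_space p)"
  unfolding stopped_walk_def by measurable

lemma borel_measurable_stopped_time [measurable]: "stopped_time x n \<in> borel_measurable (cookie_space p)"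
  unfolding stopped_time_def by measurable

lemma indep_coordinates: "indep_vars trial (\<lambda>i \<omega>. \<omega> i) UNIV"
proof -
  interpret P: product_prob_space trial UNIV by unfold_locales
  have "distr (cookie_space p) (\<Pi>\<^sub>M i\<in>UNIV. trial i) (\<lambda>x. \<lambda>i\<in>UNIV. x i) = cookie_space p"
    unfolding cookie_space_def by (simp add: restrict_UNIV)
  also have "\<dots> = (\<Pi>\<^sub>M i\<in>UNIV. distr (cookie_space p) (trial i) (\<lambda>\<omega>. \<omega> i))"
    unfolding cookie_space_def by (intro PiM_cong refl P.PiM_component[symmetric]) simp
  finally have "distr (cookie_space p) (\<Pi>\<^sub>M i\<in>UNIV. trial i) (\<lambda>x. \<lambda>i\<in>UNIV. x i)
      = (\<Pi>\<^sub>M i\<in>UNIV. distr (cookie_space p) (trial i) (\<lambda>\<omega>. \<omega> i))" .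
  moreover have "random_variable (trial i) (\<lambda>\<omega>. \<omega> i)" for i
    unfolding cookie_space_def by (rule measurable_component_singleton) simp
  ultimately show ?thesis
    by (subst indep_vars_iff_distr_eq_PiM) auto
qed

lemma indep_past_coordinate:
  fixes G :: "(nat \<Rightarrow> bool) \<Rightarrow> real" and h :: "bool \<Rightarrow> real"
  assumes G [measurable]: "G \<in> borel_measurable (cookie_space p)"
    and past: "\<And>\<omega> \<omega>'. (\<And>i. i < j \<Longrightarrow> \<omega> i = \<omega>' i) \<Longrightarrow> G \<omega> = G \<omega>'"
  shows "indep_var borel G borel (\<lambda>\<omega>. h (\<omega> j))"
proof -
  define extend :: "(nat \<Rightarrow> bool) \<Rightarrow> nat \<Rightarrow> bool"
    where "extend f = (\<lambda>i\<in>UNIV. if i < j then f i else False)" for f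
  have "extend \<in> measurable (\<Pi>\<^sub>M i\<in>{..<j}. trial i) (cookie_space p)"
    unfolding cookie_space_def extend_def
  proof (rule measurable_restrict)
    fix i
    show "(\<lambda>f. if i < j then f i else False) \<in> measurable (\<Pi>\<^sub>M i\<in>{..<j}. trial i) (trial i)"
    proof (cases "i < j")
      case True
      then have "(\<lambda>f. f i) \<in> measurable (\<Pi>\<^sub>M i\<in>{..<j}. trial i) (trial i)"
        by (intro measurable_component_singleton) auto
      then show ?thesis using True by simp
    qed simp
  qed
  then have "G \<circ> extend \<in> borel_measurable (\<Pi>\<^sub>M i\<in>{..<j}. trial i)"
    using G by (rule measurable_comp)
  moreover have "(\<lambda>f. h (f j)) \<in> borel_measurable (\<Pi>\<^sub>M i\<in>{j}. trial i)"
    using measurable_comp[OF measurable_component_singleton[of j "{j}" trial], of h borel]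
    by (simp add: measurable_pmf_measure1 comp_def)
  moreover have "indep_var (\<Pi>\<^sub>M i\<in>{..<j}. trial i) (\<lambda>\<omega>. restrict \<omega> {..<j})
      (\<Pi>\<^sub>M i\<in>{j}. trial i) (\<lambda>\<omega>. restrict \<omega> {j})"
    using indep_var_restrict[OF indep_coordinates] by auto
  ultimately have "indep_var borel (G \<circ> extend \<circ> (\<lambda>\<omega>. restrict \<omega> {..<j}))
      borel ((\<lambda>f. h (f j)) \<circ> (\<lambda>\<omega>. restrict \<omega> {j}))"
    by (intro indep_var_compose)
  moreover have "G \<circ> extend \<circ> (\<lambda>\<omega>. restrict \<omega> {..<j}) = G"
    by (auto simp: fun_eq_iff extend_def intro!: past[symmetric])
  ultimately show ?thesis by (simp add: comp_def)
qed

lemma expectation_coordinate: "expectation (\<lambda>\<omega>. h (\<omega> j)) = h True * p j + h False * (1 - p j)"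
proof -
  interpret P: product_prob_space trial UNIV by unfold_locales
  have "expectation (\<lambda>\<omega>. h (\<omega> j)) = (\<integral>b. h b \<partial>distr (cookie_space p) (trial j) (\<lambda>\<omega>. \<omega> j))"
    using integral_distr[OF measurable_component_singleton[of j UNIV trial], of h]
    by (simp add: cookie_space_def measurable_pmf_measure1)
  also have "distr (cookie_space p) (trial j) (\<lambda>\<omega>. \<omega> j) = trial j"
    unfolding cookie_space_def by (rule P.PiM_component) simp
  finally show ?thesis using p_nonneg[of j] p_le_1[of j] by simp
qed

lemma integrable_bounded:
  fixes f :: "(nat \<Rightarrow> bool) \<Rightarrow> real"
  shows "f \<in> borel_measurable (cookie_space p) \<Longrightarrow> (\<And>\<omega>. \<bar>f \<omega>\<bar> \<le> B) \<Longrightarrow> integrable (cookie_space p) f"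
  by (rule integrable_const_bound[where B=B]) auto

lemma expectation_mult_coordinate:
  fixes G :: "(nat \<Rightarrow> bool) \<Rightarrow> real" and h :: "bool \<Rightarrow> real"
  assumes G: "G \<in> borel_measurable (cookie_space p)"
    and past: "\<And>\<omega> \<omega>'. (\<And>i. i < j \<Longrightarrow> \<omega> i = \<omega>' i) \<Longrightarrow> G \<omega> = G \<omega>'"
    and bounded: "\<And>\<omega>. \<bar>G \<omega>\<bar> \<le> B"
  shows "expectation (\<lambda>\<omega>. G \<omega> * h (\<omega> j)) = expectation G * (h True * p j + h False * (1 - p j))"
proof -
  have "\<bar>h (\<omega> j)\<bar> \<le> \<bar>h True\<bar> + \<bar>h False\<bar>" for \<omega>
    by (cases "\<omega> j") auto
  then have "integrable (cookie_space p) (\<lambda>\<omega>. h (\<omega> j))"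
    by (intro integrable_bounded) auto
  moreover have "integrable (cookie_space p) G"
    using G bounded by (rule integrable_bounded)
  ultimately show ?thesis
    using indep_var_lebesgue_integral[OF indep_past_coordinate[OF G past]] expectation_coordinate
    by simp
qed

definition drift :: "nat \<Rightarrow> real" where
  "drift i = 2 * p i - 1"

lemma expectation_mult_increment:
  fixes G :: "(nat \<Rightarrow> bool) \<Rightarrow> real"
  assumes "G \<in> borel_measurable (cookie_space p)"
    and "\<And>\<omega> \<omega>'. (\<And>i. i < j \<Longrightarrow> \<omega> i = \<omega>' i) \<Longrightarrow> G \<omega> = G \<omega>'"
    and "\<And>\<omega>. \<bar>G \<omega>\<bar> \<le> B"
  shows "expectation (\<lambda>\<omega>. G \<omega> * increment \<omega> j) = drift j * expectation G"
  using expectation_mult_coordinate[OF assms, where h="\<lambda>b. if b then 1 else -1"]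
  by (simp add: increment_def drift_def algebra_simps)

section \<open>Moments of the stopped walk\<close>

lemma integrable_active [simp]: "integrable (cookie_space p) (\<lambda>\<omega>. active x \<omega> i)"
  by (rule integrable_bounded[where B=1]) (auto simp: active_def)

lemma integrable_stopped_walk [simp]: "integrable (cookie_space p) (stopped_walk x n)"
  by (rule integrable_bounded[where B=n]) (auto intro: abs_stopped_walk_le_n)

lemma integrable_stopped_time [simp]: "integrable (cookie_space p) (stopped_time x n)"
  by (rule integrable_bounded[where B=n]) (use stopped_time_nonneg stopped_time_le in auto)

lemma integrable_stopped_walk_sq [simp]: "integrable (cookie_space p) (\<lambda>\<omega>. (stopped_walk x n \<omega>)\<^sup>2)"
  by (rule integrable_bounded[where B="real n ^ 2"])
    (measurable, metis abs_le_square_iff abs_of_nat abs_power2 abs_stopped_walk_le_n)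

lemma integrable_active_mult_walk [simp]:
  "integrable (cookie_space p) (\<lambda>\<omega>. active x \<omega> i * stopped_walk x n \<omega>)"
  by (rule integrable_bounded[where B=n])
    (auto simp: active_def intro: abs_stopped_walk_le_n)

lemma integrable_mult_increment [simp]:
  "integrable (cookie_space p) f \<Longrightarrow> integrable (cookie_space p) (\<lambda>\<omega>. f \<omega> * increment \<omega> i)"
  by (rule Bochner_Integration.integrable_bound) (auto simp: increment_def)

definition prob_active :: "nat \<Rightarrow> nat \<Rightarrow> real" where
  "prob_active x i = expectation (\<lambda>\<omega>. active x \<omega> i)"

definition mean_walk :: "nat \<Rightarrow> nat \<Rightarrow> real" where
  "mean_walk x n = expectation (stopped_walk x n)"

definition mean_time :: "nat \<Rightarrow> nat \<Rightarrow> real" where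
  "mean_time x n = expectation (stopped_time x n)"

definition second_moment :: "nat \<Rightarrow> nat \<Rightarrow> real" where
  "second_moment x n = expectation (\<lambda>\<omega>. (stopped_walk x n \<omega>)\<^sup>2)"

lemma prob_active_nonneg: "0 \<le> prob_active x i"
  unfolding prob_active_def by (rule Bochner_Integration.integral_nonneg) (simp add: active_def)

lemma prob_active_le_1: "prob_active x i \<le> 1"
proof -
  have "prob_active x i \<le> expectation (\<lambda>_. 1)"
    unfolding prob_active_def by (rule integral_mono) (auto intro: abs_le_D1[OF abs_active_le])
  then show ?thesis by simp
qed

lemma prob_active_eq_1:
  assumes "i < x" shows "prob_active x i = 1"
proof -
  have "active x \<omega> i = 1" for \<omega>
    using failures_le[of \<omega> i] assms by (simp add: active_def)
  then show ?thesis by (simp add: prob_active_def)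
qed

lemma mean_walk_eq: "mean_walk x n = (\<Sum>i<n. drift i * prob_active x i)"
proof (induction n)
  case (Suc n)
  have "expectation (\<lambda>\<omega>. active x \<omega> n * increment \<omega> n) = drift n * prob_active x n"
    unfolding prob_active_def
    by (rule expectation_mult_increment[where B=1]) (measurable, metis active_cong, rule abs_active_le)
  then show ?case
    using Suc by (simp add: mean_walk_def stopped_walk_Suc[abs_def] Bochner_Integration.integral_add)
qed (simp add: mean_walk_def stopped_walk_def[abs_def])

lemma mean_time_eq: "mean_time x n = (\<Sum>i<n. prob_active x i)"
  unfolding mean_time_def stopped_time_def[abs_def] prob_active_def
  by (rule Bochner_Integration.integral_sum) simp

lemma mean_time_le_mean_walk: "mean_time x n \<le> mean_walk x n + 2 * real x"
proof -
  have "mean_time x n \<le> expectation (\<lambda>\<omega>. stopped_walk x n \<omega> + 2 * real x)"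
    unfolding mean_time_def
    by (rule integral_mono) (auto simp: stopped_time_eq_walk)
  then show ?thesis by (simp add: mean_walk_def)
qed

lemma prob_active_le_mean_time: "real (Suc n) * prob_active x n \<le> mean_time x (Suc n)"
proof -
  have "expectation (\<lambda>\<omega>. real (Suc n) * active x \<omega> n) \<le> mean_time x (Suc n)"
    unfolding mean_time_def by (rule integral_mono) (auto simp del: of_nat_Suc intro: active_le_stopped_time)
  then show ?thesis by (simp add: prob_active_def)
qed

lemma second_moment_eq:
  "second_moment x n
    = mean_time x n + (\<Sum>k<n. 2 * drift k * expectation (\<lambda>\<omega>. active x \<omega> k * stopped_walk x k \<omega>))"
proof (induction n)
  case (Suc n)
  have "expectation (\<lambda>\<omega>. active x \<omega> n * stopped_walk x n \<omega> * increment \<omega> n)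
      = drift n * expectation (\<lambda>\<omega>. active x \<omega> n * stopped_walk x n \<omega>)"
    by (rule expectation_mult_increment[where B=n])
      (measurable, metis active_cong stopped_walk_cong, meson abs_active_mult_le abs_stopped_walk_le_n order_trans)
  moreover have "second_moment x (Suc n) = second_moment x n + prob_active x n
      + expectation (\<lambda>\<omega>. 2 * (active x \<omega> n * stopped_walk x n \<omega> * increment \<omega> n))"
    unfolding second_moment_def prob_active_def stopped_walk_Suc_sq
    by (simp add: Bochner_Integration.integral_add)
  ultimately show ?case
    using Suc by (simp add: mean_time_eq)
qed (simp add: second_moment_def mean_time_eq stopped_walk_def)

lemma abs_expectation_active_mult_walk_le:
  "\<bar>expectation (\<lambda>\<omega>. active x \<omega> k * stopped_walk x k \<omega>)\<bar> \<le> sqrt (second_moment x k)"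
proof -
  have "\<bar>expectation (\<lambda>\<omega>. active x \<omega> k * stopped_walk x k \<omega>)\<bar>
      \<le> expectation (\<lambda>\<omega>. \<bar>stopped_walk x k \<omega>\<bar>)"
    by (rule order_trans[OF integral_abs_bound integral_mono]) (auto intro: abs_active_mult_le)
  also have "\<dots> \<le> sqrt (second_moment x k)"
    unfolding second_moment_def by (rule expectation_abs_le_sqrt) simp_all
  finally show ?thesis .
qed

end

section \<open>Nonnegative summable drift\<close>

locale cookie = cookie_env +
  assumes half_le_p: "\<And>i. 1/2 \<le> p i"
    and summable_drift: "summable (\<lambda>i. 2 * p i - 1)"
begin

lemma drift_nonneg: "0 \<le> drift i"
  using half_le_p[of i] by (simp add: drift_def)

lemma drift_sums: "drift sums cookie_delta p"
  using summable_drift by (simp add: drift_def[abs_def] cookie_delta_def summable_sums)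

lemma sum_drift_le_delta: "(\<Sum>i<n. drift i) \<le> cookie_delta p"
  unfolding sums_unique[OF drift_sums]
  by (rule sum_le_suminf) (auto intro: sums_summable[OF drift_sums] drift_nonneg)

lemma delta_nonneg: "0 \<le> cookie_delta p"
  using sum_drift_le_delta[of 0] by simp

lemma mean_walk_le_delta: "mean_walk x n \<le> cookie_delta p"
proof -
  have "mean_walk x n \<le> (\<Sum>i<n. drift i)"
    unfolding mean_walk_eq
    by (rule sum_mono) (simp add: mult_left_le drift_nonneg prob_active_le_1)
  then show ?thesis
    using sum_drift_le_delta[of n] by simp
qed

lemma sum_drift_le_mean_walk:
  assumes "x \<le> n" shows "(\<Sum>i<x. drift i) \<le> mean_walk x n"
proof -
  have "(\<Sum>i<x. drift i) = (\<Sum>i<x. drift i * prob_active x i)"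
    by (simp add: prob_active_eq_1)
  also have "\<dots> \<le> (\<Sum>i<n. drift i * prob_active x i)"
    by (rule sum_mono2) (use assms drift_nonneg prob_active_nonneg in auto)
  finally show ?thesis
    by (simp add: mean_walk_eq)
qed

lemma mean_time_le: "mean_time x n \<le> 2 * real x + cookie_delta p"
  using mean_time_le_mean_walk[of x n] mean_walk_le_delta[of x n] by simp

text \<open>\<open>kappa x\<close> is the positive root of \<open>K\<^sup>2 = 2 x + \<delta> + 2 \<delta> K\<close>; this is the fixed point of the
  bootstrap in \<open>second_moment_le_kappa\<close>.\<close>
definition kappa :: "nat \<Rightarrow> real" where
  "kappa x = cookie_delta p + sqrt ((cookie_delta p)\<^sup>2 + cookie_delta p + 2 * real x)"

lemma kappa_nonneg: "0 \<le> kappa x"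
  using delta_nonneg by (simp add: kappa_def)

lemma kappa_sq: "(kappa x)\<^sup>2 = 2 * real x + cookie_delta p + 2 * cookie_delta p * kappa x"
proof -
  define d where "d = cookie_delta p"
  have "(sqrt (d\<^sup>2 + d + 2 * real x))\<^sup>2 = d\<^sup>2 + d + 2 * real x"
    using delta_nonneg by (simp add: d_def)
  then show ?thesis
    unfolding kappa_def d_def[symmetric] by (simp add: power2_sum power2_eq_square algebra_simps)
qed

lemma abs_sum_cross_le:
  assumes "\<And>k. k < n \<Longrightarrow> second_moment x k \<le> (kappa x)\<^sup>2"
  shows "\<bar>\<Sum>k<n. 2 * drift k * expectation (\<lambda>\<omega>. active x \<omega> k * stopped_walk x k \<omega>)\<bar>
    \<le> 2 * cookie_delta p * kappa x"
proof -
  have "\<bar>2 * drift k * expectation (\<lambda>\<omega>. active x \<omega> k * stopped_walk x k \<omega>)\<bar> \<le> drift k * (2 * kappa x)"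
    if "k < n" for k
  proof -
    have "sqrt (second_moment x k) \<le> kappa x"
      using assms[OF that] kappa_nonneg by (intro real_le_lsqrt)
    then show ?thesis
      using abs_expectation_active_mult_walk_le[of x k] drift_nonneg[of k]
      by (simp add: abs_mult mult_left_mono)
  qed
  then have "\<bar>\<Sum>k<n. 2 * drift k * expectation (\<lambda>\<omega>. active x \<omega> k * stopped_walk x k \<omega>)\<bar>
      \<le> (\<Sum>k<n. drift k) * (2 * kappa x)"
    unfolding sum_distrib_right by (intro order_trans[OF sum_abs sum_mono]) auto
  also have "\<dots> \<le> cookie_delta p * (2 * kappa x)"
    by (rule mult_right_mono[OF sum_drift_le_delta]) (simp add: kappa_nonneg)
  finally show ?thesis by simp
qed

lemma second_moment_le_kappa: "second_moment x n \<le> (kappa x)\<^sup>2"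
proof (induction n rule: less_induct)
  case (less n)
  then show ?case
    using second_moment_eq[of x n] abs_sum_cross_le[of n x] mean_time_le[of x n] kappa_sq[of x]
    by (simp add: abs_le_iff)
qed

lemma abs_second_moment_sub_mean_time: "\<bar>second_moment x n - mean_time x n\<bar> \<le> 2 * cookie_delta p * kappa x"
  using second_moment_eq[of x n] abs_sum_cross_le[of n x] second_moment_le_kappa by simp

lemma prob_failures_less: "prob {\<omega>. failures \<omega> n < x} = prob_active x n"
proof -
  have "(\<lambda>\<omega>. active x \<omega> n) = indicator {\<omega>. failures \<omega> n < x}"
    by (auto simp: active_def fun_eq_iff)
  then show ?thesis
    by (simp add: prob_active_def)
qed

text \<open>Not reaching \<open>x\<close> failures within the first \<open>n\<close> trials makes the walk run for \<open>n\<close> steps,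
  which by \<open>mean_time_le\<close> has probability \<open>O(1/n)\<close>.\<close>
lemma AE_failures_reach: "AE \<omega> in cookie_space p. \<exists>k. failures \<omega> k = x"
proof -
  let ?N = "{\<omega>. \<forall>k. failures \<omega> k < x}"
  have "{\<omega> \<in> space (cookie_space p). \<forall>k. failures \<omega> k < x} \<in> events"
    by measurable
  then have N: "?N \<in> events"
    by simp
  have "prob ?N \<le> (2 * real x + cookie_delta p) / real (Suc n)" for n
  proof -
    have "{\<omega> \<in> space (cookie_space p). failures \<omega> n < x} \<in> events"
      by measurable
    then have "prob ?N \<le> prob {\<omega>. failures \<omega> n < x}"
      by (intro finite_measure_mono) auto
    also have "\<dots> \<le> (2 * real x + cookie_delta p) / real (Suc n)"
      using prob_active_le_mean_time[of n x] mean_time_le[of x "Suc n"]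
      by (simp add: prob_failures_less field_simps del: of_nat_Suc)
    finally show ?thesis .
  qed
  then have "prob ?N \<le> 0"
    by (intro LIMSEQ_le_const[OF LIMSEQ_Suc[OF lim_const_over_n]]) auto
  then have "emeasure (cookie_space p) ?N = 0"
    by (simp add: emeasure_eq_measure measure_le_0_iff)
  moreover have "(\<exists>k. failures \<omega> k = x) \<longleftrightarrow> \<not> (\<forall>k. failures \<omega> k < x)" for \<omega>
  proof
    assume "\<not> (\<forall>k. failures \<omega> k < x)"
    then obtain k where "x \<le> failures \<omega> k"
      by (auto simp: not_less)
    then show "\<exists>k. failures \<omega> k = x"
      using failures_attains by blast
  qed auto
  then have "{\<omega> \<in> space (cookie_space p). \<not> (\<exists>k. failures \<omega> k = x)} = ?N"
    by auto
  ultimately show ?thesis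
    by (intro AE_iff_measurable[OF N, THEN iffD2])
qed

lemma integrable_stopped_time_sq [simp]: "integrable (cookie_space p) (\<lambda>\<omega>. (stopped_time x n \<omega>)\<^sup>2)"
  by (rule integrable_bounded[where B="real n ^ 2"])
    (measurable, use power_mono[OF stopped_time_le stopped_time_nonneg] in auto)

lemma integrable_U_add_sq: "integrable (cookie_space p) (\<lambda>\<omega>. (real (U x \<omega>) + real x)\<^sup>2)"
proof -
  have mono: "mono (\<lambda>n. (stopped_time x n \<omega>)\<^sup>2)" for \<omega>
    by (intro monoI power_mono stopped_time_mono stopped_time_nonneg)
  have "expectation (\<lambda>\<omega>. (stopped_time x n \<omega>)\<^sup>2) \<le> 2 * (kappa x)\<^sup>2 + 8 * (real x)\<^sup>2" for n
  proof -
    have "expectation (\<lambda>\<omega>. (stopped_time x n \<omega>)\<^sup>2)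
        \<le> expectation (\<lambda>\<omega>. 2 * (stopped_walk x n \<omega>)\<^sup>2 + 8 * (real x)\<^sup>2)"
      by (rule integral_mono) (auto intro: stopped_time_sq_le)
    then show ?thesis
      using second_moment_le_kappa[of x n] by (simp add: second_moment_def)
  qed
  moreover have "incseq (\<lambda>n. expectation (\<lambda>\<omega>. (stopped_time x n \<omega>)\<^sup>2))"
    using mono by (intro incseq_SucI integral_mono) (auto simp: mono_def)
  ultimately obtain L where L: "(\<lambda>n. expectation (\<lambda>\<omega>. (stopped_time x n \<omega>)\<^sup>2)) \<longlonglongrightarrow> L"
    using incseq_convergent by blast
  have lim: "AE \<omega> in cookie_space p. (\<lambda>n. (stopped_time x n \<omega>)\<^sup>2) \<longlonglongrightarrow> (real (U x \<omega>) + real x)\<^sup>2"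
    using AE_failures_reach[of x] by eventually_elim (intro tendsto_power stopped_time_tendsto)
  show ?thesis
    by (rule integrable_monotone_convergence[where f="\<lambda>n \<omega>. (stopped_time x n \<omega>)\<^sup>2",
          OF _ AE_I2[OF mono] lim L]) auto
qed

lemma integrable_U: "integrable (cookie_space p) (\<lambda>\<omega>. real (U x \<omega>))"
proof (rule Bochner_Integration.integrable_bound[OF integrable_U_add_sq])
  show "AE \<omega> in cookie_space p. norm (real (U x \<omega>)) \<le> norm ((real (U x \<omega>) + real x)\<^sup>2)"
  proof (rule AE_I2)
    fix \<omega>
    have "U x \<omega> \<le> (U x \<omega> + x) * (U x \<omega> + x)"
      using le_square[of "U x \<omega> + x"] by linarith
    then have "real (U x \<omega>) \<le> (real (U x \<omega>) + real x)\<^sup>2"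
      unfolding power2_eq_square by (metis of_nat_add of_nat_le_iff of_nat_mult)
    then show "norm (real (U x \<omega>)) \<le> norm ((real (U x \<omega>) + real x)\<^sup>2)"
      by simp
  qed
qed measurable

section \<open>Asymptotics\<close>

lemma tendsto_expectation_stopped:
  assumes [measurable]: "\<And>n. f n \<in> borel_measurable (cookie_space p)" "g \<in> borel_measurable (cookie_space p)"
    and lim: "\<And>\<omega>. \<exists>k. failures \<omega> k = x \<Longrightarrow> (\<lambda>n. f n \<omega>) \<longlonglongrightarrow> g \<omega>"
    and bound: "\<And>\<omega> n. \<exists>k. failures \<omega> k = x \<Longrightarrow> \<bar>f n \<omega>\<bar> \<le> (stopped_time x n \<omega>)\<^sup>2"
  shows "(\<lambda>n. expectation (f n)) \<longlonglongrightarrow> expectation g"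
proof (rule integral_dominated_convergence[where w="\<lambda>\<omega>. (real (U x \<omega>) + real x)\<^sup>2"])
  show "AE \<omega> in cookie_space p. (\<lambda>n. f n \<omega>) \<longlonglongrightarrow> g \<omega>"
    using AE_failures_reach[of x] by eventually_elim (rule lim)
  show "AE \<omega> in cookie_space p. norm (f n \<omega>) \<le> (real (U x \<omega>) + real x)\<^sup>2" for n
    using AE_failures_reach[of x]
  proof eventually_elim
    case (elim \<omega>)
    have "(stopped_time x n \<omega>)\<^sup>2 \<le> (real (U x \<omega>) + real x)\<^sup>2"
      using stopped_time_le_U[OF elim] stopped_time_nonneg by (rule power_mono)
    then show ?case
      using bound[OF elim, of n] by simp
  qed
qed (simp_all add: integrable_U_add_sq)

lemma mean_walk_tendsto: "mean_walk x \<longlonglongrightarrow> rho p x"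
proof -
  have "(\<lambda>n. expectation (stopped_walk x n)) \<longlonglongrightarrow> expectation (\<lambda>\<omega>. real (U x \<omega>) - real x)"
  proof (rule tendsto_expectation_stopped)
    fix \<omega> n
    assume reach: "\<exists>k. failures \<omega> k = x"
    then show "(\<lambda>n. stopped_walk x n \<omega>) \<longlonglongrightarrow> real (U x \<omega>) - real x"
      by (rule stopped_walk_tendsto)
    show "\<bar>stopped_walk x n \<omega>\<bar> \<le> (stopped_time x n \<omega>)\<^sup>2"
      using abs_stopped_walk_le stopped_time_le_sq[OF reach] by (rule order_trans)
  qed measurable
  then show ?thesis
    using integrable_U[of x] by (simp add: mean_walk_def[abs_def] rho_def EU_def)
qed

lemma mean_time_tendsto: "mean_time x \<longlonglongrightarrow> 2 * real x + rho p x"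
proof -
  have "(\<lambda>n. expectation (stopped_time x n)) \<longlonglongrightarrow> expectation (\<lambda>\<omega>. real (U x \<omega>) + real x)"
  proof (rule tendsto_expectation_stopped)
    fix \<omega> n
    assume reach: "\<exists>k. failures \<omega> k = x"
    then show "(\<lambda>n. stopped_time x n \<omega>) \<longlonglongrightarrow> real (U x \<omega>) + real x"
      by (rule stopped_time_tendsto)
    show "\<bar>stopped_time x n \<omega>\<bar> \<le> (stopped_time x n \<omega>)\<^sup>2"
      using stopped_time_le_sq[OF reach] stopped_time_nonneg by simp
  qed measurable
  then show ?thesis
    using integrable_U[of x] by (simp add: mean_time_def[abs_def] rho_def EU_def add.commute)
qed

lemma second_moment_tendsto:
  "second_moment x \<longlonglongrightarrow> expectation (\<lambda>\<omega>. (real (U x \<omega>) - real x)\<^sup>2)"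
  unfolding second_moment_def[abs_def]
proof (rule tendsto_expectation_stopped)
  fix \<omega> n
  assume "\<exists>k. failures \<omega> k = x"
  then show "(\<lambda>n. (stopped_walk x n \<omega>)\<^sup>2) \<longlonglongrightarrow> (real (U x \<omega>) - real x)\<^sup>2"
    by (intro tendsto_power stopped_walk_tendsto)
  show "\<bar>(stopped_walk x n \<omega>)\<^sup>2\<bar> \<le> (stopped_time x n \<omega>)\<^sup>2"
    using abs_stopped_walk_le[of x n \<omega>] by (simp add: abs_le_square_iff[symmetric])
qed measurable

lemma rho_le_delta: "rho p x \<le> cookie_delta p"
  by (rule LIMSEQ_le_const2[OF mean_walk_tendsto]) (auto intro: mean_walk_le_delta)

lemma sum_drift_le_rho: "(\<Sum>i<x. drift i) \<le> rho p x"
  by (rule LIMSEQ_le_const[OF mean_walk_tendsto]) (auto intro: sum_drift_le_mean_walk)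

lemma rho_nonneg: "0 \<le> rho p x"
  using sum_drift_le_rho[of x] sum_nonneg[of "{..<x}" drift] drift_nonneg by fastforce

lemma abs_expectation_sq_U_sub_le:
  "\<bar>expectation (\<lambda>\<omega>. (real (U x \<omega>) - real x)\<^sup>2) - 2 * real x\<bar>
    \<le> cookie_delta p + 2 * cookie_delta p * kappa x"
proof -
  have "(\<lambda>n. \<bar>second_moment x n - mean_time x n\<bar>)
      \<longlonglongrightarrow> \<bar>expectation (\<lambda>\<omega>. (real (U x \<omega>) - real x)\<^sup>2) - (2 * real x + rho p x)\<bar>"
    by (intro tendsto_rabs tendsto_diff second_moment_tendsto mean_time_tendsto)
  then have "\<bar>expectation (\<lambda>\<omega>. (real (U x \<omega>) - real x)\<^sup>2) - (2 * real x + rho p x)\<bar>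
      \<le> 2 * cookie_delta p * kappa x"
    by (rule LIMSEQ_le_const2) (auto intro: abs_second_moment_sub_mean_time)
  then show ?thesis
    using rho_nonneg[of x] rho_le_delta[of x] by (simp add: abs_le_iff)
qed

lemma abs_nu_sub_2_le:
  assumes "1 \<le> x"
  shows "\<bar>nu p x - 2\<bar> \<le> (cookie_delta p + 2 * cookie_delta p * kappa x) / real x"
proof -
  have "nu p x - 2 = (expectation (\<lambda>\<omega>. (real (U x \<omega>) - real x)\<^sup>2) - 2 * real x) / real x"
    using assms by (simp add: nu_def field_simps)
  then show ?thesis
    using abs_expectation_sq_U_sub_le[of x] assms by (simp add: divide_right_mono)
qed

lemma kappa_le_sqrt:
  assumes "1 \<le> x"
  shows "kappa x \<le> (cookie_delta p + sqrt ((cookie_delta p)\<^sup>2 + cookie_delta p + 2)) * sqrt (real x)"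
proof -
  define d where "d = cookie_delta p"
  have "(d\<^sup>2 + d) * 1 \<le> (d\<^sup>2 + d) * real x"
    using assms delta_nonneg by (intro mult_left_mono) (auto simp: d_def)
  then have "sqrt (d\<^sup>2 + d + 2 * real x) \<le> sqrt ((d\<^sup>2 + d + 2) * real x)"
    by (simp add: algebra_simps)
  also have "\<dots> = sqrt (d\<^sup>2 + d + 2) * sqrt (real x)"
    by (rule real_sqrt_mult)
  finally have "sqrt (d\<^sup>2 + d + 2 * real x) \<le> sqrt (d\<^sup>2 + d + 2) * sqrt (real x)" .
  moreover have "d \<le> d * sqrt (real x)"
    using assms delta_nonneg by (simp add: d_def mult_le_cancel_left1)
  ultimately show ?thesis
    unfolding kappa_def d_def[symmetric] distrib_right by (rule add_mono[rotated])
qed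

lemma abs_nu_sub_2_le_sqrt: "\<exists>C\<ge>0. \<forall>x\<ge>1. \<bar>nu p x - 2\<bar> \<le> C / sqrt (real x)"
proof (intro exI allI impI conjI)
  define d where "d = cookie_delta p"
  define c where "c = d + sqrt (d\<^sup>2 + d + 2)"
  have d: "0 \<le> d" and c: "0 \<le> c"
    using delta_nonneg by (auto simp: c_def d_def)
  show "0 \<le> d + 2 * d * c"
    using d c by simp
  fix x :: nat
  assume x: "1 \<le> x"
  have sx: "1 \<le> sqrt (real x)"
    using x by simp
  have "2 * d * kappa x \<le> 2 * d * (c * sqrt (real x))"
    using kappa_le_sqrt[OF x] d by (intro mult_left_mono) (auto simp: c_def d_def)
  moreover have "d \<le> d * sqrt (real x)"
    using mult_left_mono[OF sx d] by simp
  ultimately have "d + 2 * d * kappa x \<le> (d + 2 * d * c) * sqrt (real x)"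
    by (simp add: algebra_simps)
  then have "(d + 2 * d * kappa x) / real x \<le> (d + 2 * d * c) * sqrt (real x) / real x"
    using x by (simp add: divide_right_mono)
  also have "\<dots> = (d + 2 * d * c) / sqrt (real x)"
    using sx by (simp add: field_simps flip: real_sqrt_mult)
  finally show "\<bar>nu p x - 2\<bar> \<le> (d + 2 * d * c) / sqrt (real x)"
    using abs_nu_sub_2_le[OF x] unfolding d_def by linarith
qed

lemma rho_tendsto: "rho p \<longlonglongrightarrow> cookie_delta p"
proof (rule tendsto_sandwich[of "\<lambda>x. \<Sum>i<x. drift i" _ _ "\<lambda>_. cookie_delta p"])
  show "(\<lambda>x. \<Sum>i<x. drift i) \<longlonglongrightarrow> cookie_delta p"
    using drift_sums by (simp add: sums_def)
qed (simp_all add: sum_drift_le_rho rho_le_delta)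

lemma EU_div_tendsto: "(\<lambda>x. EU p x / real x) \<longlonglongrightarrow> 1"
proof -
  have "(\<lambda>x. 1 + rho p x * inverse (real x)) \<longlonglongrightarrow> 1 + cookie_delta p * 0"
    by (intro tendsto_intros rho_tendsto lim_inverse_n)
  moreover have "\<forall>\<^sub>F x in sequentially. 1 + rho p x * inverse (real x) = EU p x / real x"
    using eventually_ge_at_top[of 1] by eventually_elim (simp add: rho_def field_simps)
  ultimately show ?thesis
    by (simp add: tendsto_cong)
qed

lemma nu_tendsto: "nu p \<longlonglongrightarrow> 2"
proof -
  obtain C where C: "\<And>x. 1 \<le> x \<Longrightarrow> \<bar>nu p x - 2\<bar> \<le> C / sqrt (real x)"
    using abs_nu_sub_2_le_sqrt by blast
  have "(\<lambda>x. nu p x - 2) \<longlonglongrightarrow> 0"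
  proof (rule Lim_null_comparison)
    show "\<forall>\<^sub>F x in sequentially. norm (nu p x - 2) \<le> C / sqrt (real x)"
      using eventually_ge_at_top[of 1] by eventually_elim (simp add: C)
    show "(\<lambda>x. C / sqrt (real x)) \<longlonglongrightarrow> 0"
      by real_asymp
  qed
  then show ?thesis
    by (rule LIM_zero_cancel)
qed

lemma theta_tendsto: "theta p \<longlonglongrightarrow> cookie_delta p"
proof -
  have "(\<lambda>x. 2 * rho p x / nu p x) \<longlonglongrightarrow> 2 * cookie_delta p / 2"
    by (intro tendsto_intros rho_tendsto nu_tendsto) simp
  then show ?thesis
    by (simp add: theta_def[abs_def])
qed

lemma theta_le_eventually:
  "\<exists>C\<ge>0. \<forall>\<^sub>F x in sequentially. theta p x \<le> cookie_delta p + C / sqrt (real x)"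
proof -
  obtain C where "0 \<le> C" and C: "\<And>x. 1 \<le> x \<Longrightarrow> \<bar>nu p x - 2\<bar> \<le> C / sqrt (real x)"
    using abs_nu_sub_2_le_sqrt by blast
  have "(\<lambda>x. C / sqrt (real x)) \<longlonglongrightarrow> 0"
    by real_asymp
  then have "\<forall>\<^sub>F x in sequentially. C / sqrt (real x) < 1"
    by (rule order_tendstoD(2)) simp
  then have "\<forall>\<^sub>F x in sequentially. C / sqrt (real x) \<le> 1"
    by (rule eventually_mono) simp
  then have "\<forall>\<^sub>F x in sequentially. theta p x \<le> cookie_delta p + cookie_delta p * C / sqrt (real x)"
    using eventually_ge_at_top[of 1]
  proof eventually_elim
    case (elim x)
    then show ?case
      unfolding theta_def
      using two_mult_div_le[OF rho_nonneg rho_le_delta C] by simp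
  qed
  then show ?thesis
    using \<open>0 \<le> C\<close> delta_nonneg by (intro exI[of _ "cookie_delta p * C"]) auto
qed

end

theorem corollary4p3:
  fixes p :: "nat \<Rightarrow> real"
  assumes "\<And>i. 1/2 \<le> p i \<and> p i < 1"
    and "summable (\<lambda>i. 2 * p i - 1)"
  shows "(\<lambda>x. EU p x / real x) \<longlonglongrightarrow> 1
    \<and> theta p \<longlonglongrightarrow> cookie_delta p
    \<and> (\<exists>C. \<forall>\<^sub>F x in sequentially.
           theta p x \<le> cookie_delta p + C * (ln (real x)) ^ 4 / sqrt (real x))"
proof -
  have "0 \<le> p i" "p i \<le> 1" "1/2 \<le> p i" for i
    using assms(1)[of i] by auto
  then interpret cookie p
    using assms(2) by unfold_locales auto
  obtain C where "0 \<le> C"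
    and C: "\<forall>\<^sub>F x in sequentially. theta p x \<le> cookie_delta p + C / sqrt (real x)"
    using theta_le_eventually by blast
  have "\<forall>\<^sub>F x in sequentially. 1 \<le> ln (real x) ^ 4"
    by real_asymp
  with C have "\<forall>\<^sub>F x in sequentially.
      theta p x \<le> cookie_delta p + C * (ln (real x)) ^ 4 / sqrt (real x)"
  proof eventually_elim
    case (elim x)
    then have "C / sqrt (real x) \<le> C * (ln (real x)) ^ 4 / sqrt (real x)"
      using mult_left_mono[OF elim(2) \<open>0 \<le> C\<close>] by (simp add: divide_right_mono)
    with elim(1) show ?case
      by linarith
  qed
  then show ?thesis
    using EU_div_tendsto theta_tendsto by blast
qed

end
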